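(* Let $K$ be an idempotent semifield and $L$ a finite extension of $K$. Then $L$ is archimedean over $K$, i.e. for every $x\in L$ there exists $y\in K$ with $x+y=y$.
   Context: A semifield is a commutative semiring (both operations commutative monoids, distributive law) in which every nonzero element is a unit; it is idempotent if $x+x=x$ for all $x$. An extension of $K$ is a semifield $L$ with an injective homomorphism $K\to L$ (used to identify $K$ with its image); it is finite if $L$ is a finitely generated $K$-semimodule. *)

theory Defs
  imports Main
begin

text \<open>A semifield: a commutative semiring (type class comm_semiring_1, which also
  includes 0 \<noteq> 1) in which every nonzero element is a unit.\<close>
definition semifield :: "'a::comm_semiring_1 itself \<Rightarrow> bool" where
  "semifield _ \<longleftrightarrow> (\<forall>x::'a. x \<noteq> 0 \<longrightarrow> (\<exists>y. x * y = 1))"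

definition idempotent :: "'a::comm_semiring_1 itself \<Rightarrow> bool" where
  "idempotent _ \<longleftrightarrow> (\<forall>x::'a. x + x = x)"

definition semiring_hom :: "('a::comm_semiring_1 \<Rightarrow> 'b::comm_semiring_1) \<Rightarrow> bool" where
  "semiring_hom f \<longleftrightarrow> f 0 = 0 \<and> f 1 = 1 \<and>
     (\<forall>a b. f (a + b) = f a + f b) \<and> (\<forall>a b. f (a * b) = f a * f b)"

definition is_extension :: "('a::comm_semiring_1 \<Rightarrow> 'b::comm_semiring_1) \<Rightarrow> bool" where
  "is_extension f \<longleftrightarrow> semiring_hom f \<and> inj f"

text \<open>Finite extension: L is a finitely generated K-semimodule, where K acts on L by
  c \<cdot> x = f c * x.\<close>
definition finite_extension :: "('a::comm_semiring_1 \<Rightarrow> 'b::comm_semiring_1) \<Rightarrow> bool" where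
  "finite_extension f \<longleftrightarrow> is_extension f \<and>
     (\<exists>G::'b set. finite G \<and> (\<forall>x::'b. \<exists>c::'b \<Rightarrow> 'a. x = (\<Sum>g\<in>G. f (c g) * g)))"

end

theory Submission
  imports Defs
begin

text \<open>In an idempotent semiring, x + y = y is the natural order x \<le> y, and the
  theorem says that every element of L lies below an element of K. Let G generate L
  over K and let t be the sum of 1 and the generators, so t dominates both. Then any
  x = \<Sum> c(g) g lies below f(\<Sum> c(g)) t. Applying this to x = t^2 and dividing
  by the nonzero t gives t \<le> f(a) for some a in K, hence x \<le> f(\<Sum> c(g)) f(a).\<close>

lemma add_absorb_trans:
  fixes a b c :: "'a::ab_semigroup_add"
  assumes "a + b = b" and "b + c = c"
  shows "a + c = c"
  by (metis assms add.assoc)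

lemma sum_add_absorb:
  fixes h k :: "'i \<Rightarrow> 'a::comm_monoid_add"
  assumes "\<forall>i\<in>I. h i + k i = k i"
  shows "sum h I + sum k I = sum k I"
  using assms by (simp add: sum.distrib[symmetric])

lemma idempotent_add_absorb_Sum:
  fixes A :: "'a::comm_monoid_add set"
  assumes idem: "\<forall>x::'a. x + x = x" and "finite A" and "a \<in> A"
  shows "a + \<Sum>A = \<Sum>A"
proof -
  have "\<Sum>A = a + \<Sum>(A - {a})" using assms(2,3) by (simp add: sum.remove)
  then show ?thesis using idem by (metis add.assoc)
qed

lemma idempotent_add_of_one:
  assumes "(1::'a::semiring_1) + 1 = 1"
  shows "\<forall>z::'a. z + z = z"
  by (metis assms distrib_left mult_1_right)

lemma add_absorb_mult_cancel:
  fixes a b t u :: "'a::comm_semiring_1"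
  assumes "a * t + b * t = b * t" and "t * u = 1"
  shows "a + b = b"
proof -
  have "(a * t + b * t) * u = a * (t * u) + b * (t * u)"
    by (simp add: algebra_simps)
  then show ?thesis using assms by (simp add: mult.assoc)
qed

lemma semiring_hom_sum:
  assumes "semiring_hom f" and "finite I"
  shows "f (sum c I) = (\<Sum>i\<in>I. f (c i))"
  using assms(2)
  by (induction I rule: finite_induct) (use assms(1) in \<open>simp_all add: semiring_hom_def\<close>)

lemma semiring_hom_combination_absorb:
  fixes f :: "'k::comm_semiring_1 \<Rightarrow> 'l::comm_semiring_1"
  assumes "semiring_hom f" and "finite G" and "\<forall>g\<in>G. g + t = t"
  shows "(\<Sum>g\<in>G. f (c g) * g) + f (sum c G) * t = f (sum c G) * t"
proof -
  have "f (sum c G) * t = (\<Sum>g\<in>G. f (c g) * t)"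
    using semiring_hom_sum[OF assms(1,2)] by (simp add: sum_distrib_right)
  moreover have "\<forall>g\<in>G. f (c g) * g + f (c g) * t = f (c g) * t"
    using assms(3) by (metis distrib_left)
  ultimately show ?thesis by (simp add: sum_add_absorb)
qed

theorem mainTheorem5:
  fixes f :: "'k::comm_semiring_1 \<Rightarrow> 'l::comm_semiring_1"
  assumes "semifield TYPE('k)" and "idempotent TYPE('k)"
    and "semifield TYPE('l)"
    and "finite_extension f"
  shows "\<forall>x::'l. \<exists>y::'k. x + f y = f y"
proof
  fix x :: 'l
  have hom: "semiring_hom f" using assms(4) by (simp add: finite_extension_def is_extension_def)
  obtain G :: "'l set" where G: "finite G" "\<forall>z::'l. \<exists>c. z = (\<Sum>g\<in>G. f (c g) * g)"
    using assms(4) by (auto simp: finite_extension_def)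
  have "(1::'l) + 1 = 1"
    using hom assms(2) unfolding semiring_hom_def idempotent_def by metis
  then have idem: "\<forall>z::'l. z + z = z" by (rule idempotent_add_of_one)
  define t where "t = \<Sum>(insert 1 G)"
  have t_absorb: "\<forall>g\<in>insert 1 G. g + t = t"
    using idempotent_add_absorb_Sum[OF idem] G(1) by (simp add: t_def)
  then have "t \<noteq> 0" by force
  then obtain u where u: "t * u = 1" using assms(3) by (auto simp: semifield_def)
  obtain d where "t * t = (\<Sum>g\<in>G. f (d g) * g)" using G(2) by blast
  then have "t * t + f (sum d G) * t = f (sum d G) * t"
    using semiring_hom_combination_absorb[OF hom G(1)] t_absorb by simp
  then have "t + f (sum d G) = f (sum d G)" using u by (rule add_absorb_mult_cancel)
  then have t_below: "f (sum c G) * t + f (sum c G) * f (sum d G) = f (sum c G) * f (sum d G)"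
    for c by (metis distrib_left)
  obtain c where "x = (\<Sum>g\<in>G. f (c g) * g)" using G(2) by blast
  then have "x + f (sum c G) * t = f (sum c G) * t"
    using semiring_hom_combination_absorb[OF hom G(1)] t_absorb by simp
  then have "x + f (sum c G) * f (sum d G) = f (sum c G) * f (sum d G)"
    using t_below by (rule add_absorb_trans)
  then show "\<exists>y. x + f y = f y" using hom unfolding semiring_hom_def by metis
qed

end
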